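(* Consider the linear program $\min\{c^\top x + d^\top y : Tx + Qy = h,\ x \in X,\ y \in Y\}$ and its epigraphical reformulation with feasible region $\mathcal{F} = \{(x,\theta) : x \in X,\ (h - Tx, \theta) \in \mathrm{epi}(f_Y)\}$. Let $\rho \in \mathbb{R}^n$ and $\rho_0 \ge 0$, and assume $\sigma_{\mathcal{F}}(\rho,\rho_0)$ is finite. Then the problem $$\max_{\alpha \in \mathbb{R}^p}\Big\{-\alpha^\top h + \sigma_X(\rho + T^\top \alpha) + \sigma_Y(Q^\top\alpha + \rho_0 d)\Big\}$$ has an optimal solution and its optimal value equals $\sigma_{\mathcal{F}}(\rho,\rho_0)$. Moreover, if $\hat\alpha$ is any optimal solution, then every $(x,\theta)$ with $x \in X$ that satisfies the Benders' cut $\hat\alpha^\top(h - Tx) + \rho_0 \theta \ge \sigma_{\mathrm{epi}(f_Y)}(\hat\alpha, \rho_0)$ also satisfies $\rho^\top x + \rho_0\theta \ge \sigma_{\mathcal{F}}(\rho,\rho_0)$.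
   Context: $X \subseteq \mathbb{R}^n$ and $Y \subseteq \mathbb{R}^m$ are nonempty polyhedra with rational data, $Y$ pointed; $T \in \mathbb{R}^{p\times n}$, $Q \in \mathbb{R}^{p \times m}$, $h \in \mathbb{R}^p$, $c \in \mathbb{R}^n$, $d \in \mathbb{R}^m$. For $\mathcal{X} \subseteq \mathbb{R}^t$, the support is $\sigma_{\mathcal{X}}(\alpha) := \inf_{x \in \mathcal{X}} \alpha^\top x$ (so $+\infty$ if $\mathcal{X}=\emptyset$), and for sets of pairs we write $\sigma_{\mathcal{X}}(\alpha,\gamma)$ for $\inf_{(x,y)\in\mathcal{X}}\{\alpha^\top x + \gamma^\top y\}$. For $\mathcal{Y} \subseteq \mathbb{R}^m$, $f_{\mathcal{Y}}(w) := \inf_{y \in \mathcal{Y}}\{d^\top y : Qy = w\}$ and $\mathrm{epi}(f_{\mathcal{Y}}) := \{(w,\theta) \in \mathbb{R}^p\times\mathbb{R} : \theta \ge f_{\mathcal{Y}}(w)\}$. A Benders' cut is an inequality $\alpha^\top w + \alpha_0\theta \ge \beta$ valid for $\mathrm{epi}(f_Y)$, applied with $w = h - Tx$. *)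

theory Defs
  imports "HOL-Analysis.Analysis" "HOL-Library.Extended_Real"
begin

definition rat_polyhedron :: "(real^'n) set \<Rightarrow> bool" where
  "rat_polyhedron S \<longleftrightarrow>
     (\<exists>F :: ((real^'n) \<times> real) set. finite F \<and>
        (\<forall>(a,b)\<in>F. (\<forall>i. a$i \<in> \<rat>) \<and> b \<in> \<rat>) \<and>
        S = {x. \<forall>(a,b)\<in>F. a \<bullet> x \<le> b})"

definition pointed :: "(real^'n) set \<Rightarrow> bool" where
  "pointed S \<longleftrightarrow> \<not> (\<exists>y v. v \<noteq> 0 \<and> (\<forall>t::real. y + t *\<^sub>R v \<in> S))"

text \<open>Support function (an infimum, in the extended reals; +\<infinity> on the empty set).\<close>
definition supp :: "(real^'n) set \<Rightarrow> real^'n \<Rightarrow> ereal" where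
  "supp S a = (INF x\<in>S. ereal (a \<bullet> x))"

definition supp2 :: "((real^'n) \<times> real) set \<Rightarrow> real^'n \<Rightarrow> real \<Rightarrow> ereal" where
  "supp2 S a g = (INF (x,t)\<in>S. ereal (a \<bullet> x + g * t))"

definition fval :: "(real^'m) set \<Rightarrow> real^'m \<Rightarrow> real^'m^'p \<Rightarrow> real^'p \<Rightarrow> ereal" where
  "fval Y d Q w = (INF y\<in>{y\<in>Y. Q *v y = w}. ereal (d \<bullet> y))"

definition epi :: "(real^'p \<Rightarrow> ereal) \<Rightarrow> ((real^'p) \<times> real) set" where
  "epi f = {(w,\<theta>). f w \<le> ereal \<theta>}"

definition feasF :: "(real^'n) set \<Rightarrow> (real^'m) set \<Rightarrow> real^'n^'p \<Rightarrow> real^'m^'p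
    \<Rightarrow> real^'p \<Rightarrow> real^'m \<Rightarrow> ((real^'n) \<times> real) set" where
  "feasF X Y T Q h d = {(x,\<theta>). x \<in> X \<and> (h - T *v x, \<theta>) \<in> epi (fval Y d Q)}"

definition dualobj :: "(real^'n) set \<Rightarrow> (real^'m) set \<Rightarrow> real^'n^'p \<Rightarrow> real^'m^'p
    \<Rightarrow> real^'p \<Rightarrow> real^'m \<Rightarrow> real^'n \<Rightarrow> real \<Rightarrow> real^'p \<Rightarrow> ereal" where
  "dualobj X Y T Q h d \<rho> \<rho>0 \<alpha> =
     ereal (- (\<alpha> \<bullet> h)) + supp X (\<rho> + transpose T *v \<alpha>) + supp Y (transpose Q *v \<alpha> + \<rho>0 *\<^sub>R d)"

end

theory Submission
  imports Defs
begin

(* The primal value v = sigma_F(rho, rho0) is a lower bound for rho x + rho0 d y over all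
   x in X, y in Y with T x + Q y = h. Farkas' lemma turns this bound into a Lagrange multiplier
   alpha for the coupling constraint, i.e. v <= (rho + T^T alpha) x + (Q^T alpha + rho0 d) y - alpha h
   on all of X x Y, which says exactly that the dual objective at alpha is at least v. Weak duality
   bounds every dual value by v, so alpha is optimal and the dual optimum is v. For the cut, one has
   sigma_Y(Q^T alpha + rho0 d) <= sigma_epi(f_Y)(alpha, rho0), so a point satisfying the cut of an
   optimal alpha has rho x + rho0 theta at least the dual objective at alpha, which is v.
   The rationality of the data, the pointedness of Y and the nonemptiness of X and Y (implied by
   the finiteness of the value) are not used. *)

definition polyhedron_of :: "('a::real_inner \<times> real) set \<Rightarrow> 'a set" where
  "polyhedron_of F = {z. \<forall>(a,b)\<in>F. a \<bullet> z \<le> b}"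

lemma rat_polyhedron_imp_polyhedron_of:
  assumes "rat_polyhedron S"
  obtains F where "finite F" "S = polyhedron_of F"
  using assms unfolding rat_polyhedron_def polyhedron_of_def by blast

lemma polyhedron_of_Times:
  "polyhedron_of ((\<lambda>(a,b). ((a,0),b)) ` F \<union> (\<lambda>(a,b). ((0,a),b)) ` G)
     = polyhedron_of F \<times> polyhedron_of G"
  unfolding polyhedron_of_def by (auto simp: ball_Un)

lemma convex_cone_hull_separation:
  fixes S :: "'a::euclidean_space set"
  assumes "finite S" and "z \<notin> convex_cone hull S"
  obtains a where "a \<bullet> z < 0" and "\<And>s. s \<in> S \<Longrightarrow> 0 \<le> a \<bullet> s"
proof -
  obtain a b where ab: "a \<bullet> z < b" "\<And>x. x \<in> convex_cone hull S \<Longrightarrow> b < a \<bullet> x"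
    using separating_hyperplane_closed_point[OF convex_convex_cone_hull
        closed_convex_cone_hull[OF \<open>finite S\<close>] assms(2)] by blast
  have "b < 0"
    using ab(2)[OF convex_cone_hull_contains_0] by simp
  have "0 \<le> a \<bullet> s" if "s \<in> S" for s
  proof (rule ccontr)
    assume neg: "\<not> 0 \<le> a \<bullet> s"
    have "(b / (a \<bullet> s)) *\<^sub>R s \<in> convex_cone hull S"
      using \<open>b < 0\<close> neg that
      by (intro convex_cone_hull_mul hull_inc) (auto simp: divide_nonpos_neg)
    from ab(2)[OF this] neg show False by simp
  qed
  with ab(1) \<open>b < 0\<close> show thesis by (intro that) auto
qed

lemma farkas_mixed:
  fixes G :: "'a::euclidean_space set" and t :: "'i::finite \<Rightarrow> 'a"
  assumes "finite G"
  shows "(\<exists>c \<beta>. (\<forall>g\<in>G. 0 \<le> c g) \<and> z = (\<Sum>g\<in>G. c g *\<^sub>R g) + (\<Sum>i\<in>UNIV. \<beta> i *\<^sub>R t i))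
     \<or> (\<exists>a. a \<bullet> z < 0 \<and> (\<forall>g\<in>G. 0 \<le> a \<bullet> g) \<and> (\<forall>i. a \<bullet> t i = 0))"
proof -
  define K where "K = {u. \<exists>c \<beta>. (\<forall>g\<in>G. 0 \<le> c g) \<and> u = (\<Sum>g\<in>G. c g *\<^sub>R g) + (\<Sum>i\<in>UNIV. \<beta> i *\<^sub>R t i)}"
  define S where "S = G \<union> range t \<union> range (\<lambda>i. - t i)"
  have "convex_cone K"
    unfolding convex_cone_iff
  proof (intro conjI ballI allI impI)
    show "0 \<in> K"
      unfolding K_def by (intro CollectI exI[of _ "\<lambda>_. 0"]) simp
  next
    fix x y assume "x \<in> K" "y \<in> K"
    then obtain c \<beta> c' \<beta>' where "\<forall>g\<in>G. 0 \<le> c g" "x = (\<Sum>g\<in>G. c g *\<^sub>R g) + (\<Sum>i\<in>UNIV. \<beta> i *\<^sub>R t i)"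
      and "\<forall>g\<in>G. 0 \<le> c' g" "y = (\<Sum>g\<in>G. c' g *\<^sub>R g) + (\<Sum>i\<in>UNIV. \<beta>' i *\<^sub>R t i)"
      unfolding K_def by blast
    then show "x + y \<in> K"
      unfolding K_def
      by (intro CollectI exI[of _ "\<lambda>g. c g + c' g"] exI[of _ "\<lambda>i. \<beta> i + \<beta>' i"])
        (simp add: sum.distrib algebra_simps)
  next
    fix x and k :: real assume "x \<in> K" "0 \<le> k"
    then obtain c \<beta> where "\<forall>g\<in>G. 0 \<le> c g" "x = (\<Sum>g\<in>G. c g *\<^sub>R g) + (\<Sum>i\<in>UNIV. \<beta> i *\<^sub>R t i)"
      unfolding K_def by blast
    with \<open>0 \<le> k\<close> show "k *\<^sub>R x \<in> K"
      unfolding K_def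
      by (intro CollectI exI[of _ "\<lambda>g. k * c g"] exI[of _ "\<lambda>i. k * \<beta> i"])
        (simp add: scaleR_add_right scaleR_sum_right)
  qed
  moreover have "S \<subseteq> K"
  proof -
    have "g \<in> K" if "g \<in> G" for g
      using that \<open>finite G\<close> unfolding K_def
      by (intro CollectI exI[of _ "\<lambda>h. if h = g then 1 else 0"] exI[of _ "\<lambda>_. 0"])
        (simp add: if_distrib[of "\<lambda>c. c *\<^sub>R _"] cong: if_cong)
    moreover have scaled: "s *\<^sub>R t j \<in> K" for j s
      unfolding K_def
      by (intro CollectI exI[of _ "\<lambda>_. 0"] exI[of _ "\<lambda>i. if i = j then s else 0"])
        (simp add: if_distrib[of "\<lambda>c. c *\<^sub>R _"] cong: if_cong)
    have "t j \<in> K" "- t j \<in> K" for j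
      using scaled[of 1 j] scaled[of "-1" j] by simp_all
    ultimately show ?thesis
      unfolding S_def by blast
  qed
  ultimately have hull: "convex_cone hull S \<subseteq> K"
    by (rule hull_minimal[rotated])
  show ?thesis
  proof (cases "z \<in> K")
    case True
    then show ?thesis unfolding K_def by blast
  next
    case False
    have "finite S" unfolding S_def using \<open>finite G\<close> by simp
    then obtain a where "a \<bullet> z < 0" and sep: "\<And>s. s \<in> S \<Longrightarrow> 0 \<le> a \<bullet> s"
      using convex_cone_hull_separation False hull by blast
    have "a \<bullet> t i = 0" for i
      using sep[of "t i"] sep[of "- t i"] unfolding S_def by auto
    with \<open>a \<bullet> z < 0\<close> sep show ?thesis
      unfolding S_def by blast
  qed
qed

lemma lp_homogeneous_bound:
  fixes F :: "('a::real_inner \<times> real) set" and A :: "'i \<Rightarrow> 'a"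
  assumes z0: "z0 \<in> polyhedron_of F" "\<forall>i. A i \<bullet> z0 = h i"
    and low: "\<And>z. z \<in> polyhedron_of F \<Longrightarrow> \<forall>i. A i \<bullet> z = h i \<Longrightarrow> v \<le> r \<bullet> z"
    and "t \<le> 0" and dirF: "\<forall>(a,b)\<in>F. t * b \<le> a \<bullet> u" and dirA: "\<forall>i. A i \<bullet> u = t * h i"
  shows "r \<bullet> u \<le> t * v"
proof (cases "t < 0")
  case True
  have "(1/t) *\<^sub>R u \<in> polyhedron_of F"
    using dirF True unfolding polyhedron_of_def by (auto simp: neg_divide_le_eq mult.commute)
  moreover have "\<forall>i. A i \<bullet> ((1/t) *\<^sub>R u) = h i"
    using dirA True by simp
  ultimately have "v \<le> (r \<bullet> u) / t"
    using low by fastforce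
  with True show ?thesis
    by (simp add: neg_le_divide_eq mult.commute)
next
  case False
  with \<open>t \<le> 0\<close> have "t = 0" by simp
  (* if r \<bullet> u > 0, moving from z0 along -u stays feasible and drives r \<bullet> z below v *)
  show ?thesis
  proof (rule ccontr)
    assume "\<not> ?thesis"
    with \<open>t = 0\<close> have "0 < r \<bullet> u" by simp
    define l where "l = (r \<bullet> z0 - v + 1) / (r \<bullet> u)"
    have "v \<le> r \<bullet> z0"
      using low z0 by blast
    with \<open>0 < r \<bullet> u\<close> have "0 \<le> l"
      unfolding l_def by simp
    have "a \<bullet> (z0 - l *\<^sub>R u) \<le> b" if "(a, b) \<in> F" for a b
    proof -
      have "0 \<le> a \<bullet> u" "a \<bullet> z0 \<le> b"
        using dirF z0(1) that \<open>t = 0\<close> unfolding polyhedron_of_def by auto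
      moreover have "a \<bullet> (z0 - l *\<^sub>R u) = a \<bullet> z0 - l * (a \<bullet> u)"
        by (simp add: inner_diff_right)
      ultimately show ?thesis
        using mult_nonneg_nonneg[OF \<open>0 \<le> l\<close>] by (metis diff_le_eq add_increasing2)
    qed
    then have "z0 - l *\<^sub>R u \<in> polyhedron_of F"
      unfolding polyhedron_of_def by blast
    moreover have "\<forall>i. A i \<bullet> (z0 - l *\<^sub>R u) = h i"
      using z0(2) dirA \<open>t = 0\<close> by (simp add: inner_diff_right)
    ultimately have "v \<le> r \<bullet> (z0 - l *\<^sub>R u)"
      using low by blast
    also have "\<dots> = v - 1"
      using \<open>0 < r \<bullet> u\<close> by (simp add: l_def inner_diff_right)
    finally show False by simp
  qed
qed

lemma lp_lagrange_multipliers: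
  fixes F :: "('a::euclidean_space \<times> real) set" and A :: "'i::finite \<Rightarrow> 'a"
  assumes "finite F"
    and z0: "z0 \<in> polyhedron_of F" "\<forall>i. A i \<bullet> z0 = h i"
    and low: "\<And>z. z \<in> polyhedron_of F \<Longrightarrow> \<forall>i. A i \<bullet> z = h i \<Longrightarrow> v \<le> r \<bullet> z"
  obtains \<beta> where "\<forall>z\<in>polyhedron_of F. v \<le> r \<bullet> z + (\<Sum>i\<in>UNIV. \<beta> i * (A i \<bullet> z - h i))"
proof -
  (* Farkas for the homogenization: a \<bullet> z \<le> b becomes (a, -b) \<bullet> (z, 1) \<le> 0. *)
  define G :: "('a \<times> real) set" where "G = (\<lambda>(a,b). (a, -b)) ` F \<union> {(0, -1)}"
  have "finite G"
    unfolding G_def using \<open>finite F\<close> by simp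
  from farkas_mixed[OF this, of "(-r, v)" "\<lambda>i. (A i, - h i)"] show thesis
  proof (elim disjE exE conjE)
    fix c \<beta> assume c: "\<forall>g\<in>G. 0 \<le> c g"
      and comb: "(-r, v) = (\<Sum>g\<in>G. c g *\<^sub>R g) + (\<Sum>i\<in>UNIV. \<beta> i *\<^sub>R (A i, - h i))"
    show thesis
    proof (rule that, intro ballI)
      fix z assume z: "z \<in> polyhedron_of F"
      have "g \<bullet> (z, 1) \<le> 0" if "g \<in> G" for g
        using that z unfolding G_def polyhedron_of_def by auto
      with c have "(\<Sum>g\<in>G. c g * (g \<bullet> (z, 1))) \<le> 0"
        by (simp add: sum_nonpos mult_nonneg_nonpos)
      moreover have "(-r, v) \<bullet> (z, 1) = (\<Sum>g\<in>G. c g * (g \<bullet> (z, 1))) + (\<Sum>i\<in>UNIV. \<beta> i * (A i \<bullet> z - h i))"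
        unfolding comb by (simp add: inner_add_left inner_sum_left right_diff_distrib)
      ultimately show "v \<le> r \<bullet> z + (\<Sum>i\<in>UNIV. \<beta> i * (A i \<bullet> z - h i))"
        by simp
    qed
  next
    fix a :: "'a \<times> real"
    assume sep: "a \<bullet> (-r, v) < 0" "\<forall>g\<in>G. 0 \<le> a \<bullet> g" "\<forall>i. a \<bullet> (A i, - h i) = 0"
    obtain u t where a: "a = (u, t)" by fastforce
    have "t \<le> 0"
      using sep(2) unfolding G_def a by auto
    moreover have "\<forall>(a',b)\<in>F. t * b \<le> a' \<bullet> u"
      using sep(2) unfolding G_def a by (force simp: inner_commute)
    moreover have "\<forall>i. A i \<bullet> u = t * h i"
      using sep(3) unfolding a by (simp add: inner_commute)
    ultimately have "r \<bullet> u \<le> t * v"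
      using lp_homogeneous_bound[OF z0 low] by blast
    with sep(1) show thesis
      unfolding a by (simp add: inner_commute)
  qed
qed

lemma axis_vector_matrix_inner:
  fixes M :: "real^'n^'m"
  shows "(axis i 1 v* M) \<bullet> x = (M *v x) $ i"
  by (simp add: dot_lmul_matrix inner_commute[of "axis i 1"] inner_axis)

lemma lp_multiplier_block:
  fixes T :: "real^'n^'p" and Q :: "real^'m^'p"
  assumes "finite FX" "finite FY"
    and feas: "x0 \<in> polyhedron_of FX" "y0 \<in> polyhedron_of FY" "T *v x0 + Q *v y0 = h"
    and low: "\<And>x y. x \<in> polyhedron_of FX \<Longrightarrow> y \<in> polyhedron_of FY \<Longrightarrow> T *v x + Q *v y = h
      \<Longrightarrow> v \<le> \<rho> \<bullet> x + e \<bullet> y"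
  obtains \<alpha> where "\<forall>x\<in>polyhedron_of FX. \<forall>y\<in>polyhedron_of FY.
      v \<le> \<rho> \<bullet> x + e \<bullet> y + \<alpha> \<bullet> (T *v x + Q *v y - h)"
proof -
  define F :: "(((real^'n) \<times> (real^'m)) \<times> real) set"
    where "F = (\<lambda>(a,b). ((a,0),b)) ` FX \<union> (\<lambda>(a,b). ((0,a),b)) ` FY"
  define A where "A i = (axis i 1 v* T, axis i 1 v* Q)" for i :: 'p
  have P: "polyhedron_of F = polyhedron_of FX \<times> polyhedron_of FY"
    unfolding F_def by (rule polyhedron_of_Times)
  have A: "A i \<bullet> (x, y) = (T *v x + Q *v y) $ i" for i x y
    by (simp add: A_def axis_vector_matrix_inner)
  have "finite F"
    unfolding F_def using assms(1,2) by simp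
  moreover have "(x0, y0) \<in> polyhedron_of F" "\<forall>i. A i \<bullet> (x0, y0) = h $ i"
    using feas by (simp_all add: P A)
  moreover have "\<And>z. z \<in> polyhedron_of F \<Longrightarrow> \<forall>i. A i \<bullet> z = h $ i \<Longrightarrow> v \<le> (\<rho>, e) \<bullet> z"
    using low by (auto simp: P A vec_eq_iff)
  ultimately obtain \<beta> where \<beta>: "\<forall>z\<in>polyhedron_of F.
      v \<le> (\<rho>, e) \<bullet> z + (\<Sum>i\<in>UNIV. \<beta> i * (A i \<bullet> z - h $ i))"
    by (rule lp_lagrange_multipliers)
  show thesis
  proof (rule that, intro ballI)
    fix x y assume "x \<in> polyhedron_of FX" "y \<in> polyhedron_of FY"
    then have "v \<le> (\<rho>, e) \<bullet> (x, y) + (\<Sum>i\<in>UNIV. \<beta> i * (A i \<bullet> (x, y) - h $ i))"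
      using \<beta> P by blast
    also have "\<dots> = \<rho> \<bullet> x + e \<bullet> y + (\<chi> i. \<beta> i) \<bullet> (T *v x + Q *v y - h)"
      by (simp add: A inner_vec_def)
    finally show "v \<le> \<rho> \<bullet> x + e \<bullet> y + (\<chi> i. \<beta> i) \<bullet> (T *v x + Q *v y - h)" .
  qed
qed

lemma supp_le_of_fval_le:
  assumes "0 \<le> \<rho>0" and "fval Y d Q w \<le> ereal \<theta>"
  shows "supp Y (transpose Q *v \<alpha> + \<rho>0 *\<^sub>R d) \<le> ereal (\<alpha> \<bullet> w + \<rho>0 * \<theta>)"
proof (rule ereal_le_epsilon2)
  fix e :: real assume "0 < e"
  (* dividing by \<rho>0 + 1 rather than \<rho>0 avoids a case split on \<rho>0 = 0 *)
  define \<delta> where "\<delta> = e / (\<rho>0 + 1)"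
  have "0 < \<delta>" "\<rho>0 * \<delta> \<le> e"
    using \<open>0 < e\<close> \<open>0 \<le> \<rho>0\<close> by (auto simp: \<delta>_def field_simps)
  have "fval Y d Q w < ereal (\<theta> + \<delta>)"
    using assms(2) \<open>0 < \<delta>\<close> by (simp add: le_less_trans)
  then obtain y where y: "y \<in> Y" "Q *v y = w" "d \<bullet> y < \<theta> + \<delta>"
    unfolding fval_def by (auto simp: INF_less_iff)
  have "supp Y (transpose Q *v \<alpha> + \<rho>0 *\<^sub>R d) \<le> ereal ((transpose Q *v \<alpha> + \<rho>0 *\<^sub>R d) \<bullet> y)"
    unfolding supp_def using y(1) by (rule INF_lower)
  also have "(transpose Q *v \<alpha> + \<rho>0 *\<^sub>R d) \<bullet> y = \<alpha> \<bullet> w + \<rho>0 * (d \<bullet> y)"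
    using y(2) by (simp add: inner_add_left dot_lmul_matrix)
  also have "\<rho>0 * (d \<bullet> y) \<le> \<rho>0 * \<theta> + e"
    using mult_left_mono[OF less_imp_le[OF y(3)] \<open>0 \<le> \<rho>0\<close>] \<open>\<rho>0 * \<delta> \<le> e\<close>
    by (simp add: distrib_left)
  finally show "supp Y (transpose Q *v \<alpha> + \<rho>0 *\<^sub>R d) \<le> ereal (\<alpha> \<bullet> w + \<rho>0 * \<theta>) + ereal e"
    by (simp add: add.assoc)
qed

lemma supp_le_supp2_epi:
  assumes "0 \<le> \<rho>0"
  shows "supp Y (transpose Q *v \<alpha> + \<rho>0 *\<^sub>R d) \<le> supp2 (epi (fval Y d Q)) \<alpha> \<rho>0"
  unfolding supp2_def epi_def
  by (rule INF_greatest) (auto simp del: transpose_matrix_vector intro: supp_le_of_fval_le[OF assms])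

lemma dualobj_le:
  assumes "x \<in> X"
    and "supp Y (transpose Q *v \<alpha> + \<rho>0 *\<^sub>R d) \<le> ereal (\<alpha> \<bullet> (h - T *v x) + \<rho>0 * \<theta>)"
  shows "dualobj X Y T Q h d \<rho> \<rho>0 \<alpha> \<le> ereal (\<rho> \<bullet> x + \<rho>0 * \<theta>)"
proof -
  have "supp X (\<rho> + transpose T *v \<alpha>) \<le> ereal ((\<rho> + transpose T *v \<alpha>) \<bullet> x)"
    unfolding supp_def using assms(1) by (rule INF_lower)
  then have "dualobj X Y T Q h d \<rho> \<rho>0 \<alpha> \<le> ereal (- (\<alpha> \<bullet> h)) + ereal ((\<rho> + transpose T *v \<alpha>) \<bullet> x)
      + ereal (\<alpha> \<bullet> (h - T *v x) + \<rho>0 * \<theta>)"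
    unfolding dualobj_def using assms(2) by (intro add_mono order_refl)
  also have "\<dots> = ereal (\<rho> \<bullet> x + \<rho>0 * \<theta>)"
    by (simp add: inner_add_left inner_diff_right dot_lmul_matrix)
  finally show ?thesis .
qed

lemma dualobj_le_supp2_feasF:
  assumes "0 \<le> \<rho>0"
  shows "dualobj X Y T Q h d \<rho> \<rho>0 \<alpha> \<le> supp2 (feasF X Y T Q h d) \<rho> \<rho>0"
  unfolding supp2_def feasF_def epi_def
  by (rule INF_greatest)
    (auto simp del: transpose_matrix_vector intro!: dualobj_le supp_le_of_fval_le[OF assms])

lemma dualobj_le_of_benders_cut:
  assumes "0 \<le> \<rho>0" and "x \<in> X"
    and "supp2 (epi (fval Y d Q)) \<alpha> \<rho>0 \<le> ereal (\<alpha> \<bullet> (h - T *v x) + \<rho>0 * \<theta>)"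
  shows "dualobj X Y T Q h d \<rho> \<rho>0 \<alpha> \<le> ereal (\<rho> \<bullet> x + \<rho>0 * \<theta>)"
  using assms(2) order_trans[OF supp_le_supp2_epi[OF assms(1)] assms(3)] by (rule dualobj_le)

lemma supp2_feasF_le:
  assumes "x \<in> X" "y \<in> Y" "T *v x + Q *v y = h"
  shows "supp2 (feasF X Y T Q h d) \<rho> \<rho>0 \<le> ereal (\<rho> \<bullet> x + \<rho>0 * (d \<bullet> y))"
proof -
  have "fval Y d Q (h - T *v x) \<le> ereal (d \<bullet> y)"
    unfolding fval_def using assms(2,3) by (intro INF_lower) (auto simp: algebra_simps)
  with assms(1) have "(x, d \<bullet> y) \<in> feasF X Y T Q h d"
    unfolding feasF_def epi_def by simp
  then show ?thesis
    unfolding supp2_def by (rule INF_lower2) simp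
qed

lemma feasF_obtain_feasible:
  assumes "supp2 (feasF X Y T Q h d) \<rho> \<rho>0 \<noteq> \<infinity>"
  obtains x y where "x \<in> X" "y \<in> Y" "T *v x + Q *v y = h"
proof -
  have "feasF X Y T Q h d \<noteq> {}"
    using assms by (auto simp: supp2_def top_ereal_def)
  then obtain x \<theta> where "x \<in> X" and x\<theta>: "fval Y d Q (h - T *v x) \<le> ereal \<theta>"
    unfolding feasF_def epi_def by auto
  have "{y \<in> Y. Q *v y = h - T *v x} \<noteq> {}"
  proof
    assume "{y \<in> Y. Q *v y = h - T *v x} = {}"
    with x\<theta> show False
      by (simp add: fval_def top_ereal_def)
  qed
  then obtain y where "y \<in> Y" "Q *v y = h - T *v x"
    by blast
  with \<open>x \<in> X\<close> show thesis
    by (intro that) auto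
qed

lemma ereal_le_supp_add_supp:
  assumes "x0 \<in> X" "y0 \<in> Y" and bound: "\<And>x y. x \<in> X \<Longrightarrow> y \<in> Y \<Longrightarrow> c \<le> a \<bullet> x + b \<bullet> y"
  shows "ereal c \<le> supp X a + supp Y b"
proof -
  have lower: "ereal (c - b \<bullet> y) \<le> supp X a" if "y \<in> Y" for y
    unfolding supp_def using bound that by (intro INF_greatest) (simp add: algebra_simps)
  have "supp X a \<le> ereal (a \<bullet> x0)"
    unfolding supp_def using assms(1) by (rule INF_lower)
  with lower[OF assms(2)] obtain s where s: "supp X a = ereal s"
    by (cases "supp X a") auto
  have "ereal (c - s) \<le> supp Y b"
    unfolding supp_def using lower s by (intro INF_greatest) (simp add: algebra_simps)
  then have "ereal s + ereal (c - s) \<le> supp X a + supp Y b"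
    unfolding s by (rule add_left_mono)
  then show ?thesis
    by simp
qed

lemma dualobj_attains_supp2:
  assumes "finite FX" "X = polyhedron_of FX" "finite FY" "Y = polyhedron_of FY"
    and v: "supp2 (feasF X Y T Q h d) \<rho> \<rho>0 = ereal v"
  obtains \<alpha> where "ereal v \<le> dualobj X Y T Q h d \<rho> \<rho>0 \<alpha>"
proof -
  have "supp2 (feasF X Y T Q h d) \<rho> \<rho>0 \<noteq> \<infinity>"
    using v by simp
  then obtain x0 y0 where feas: "x0 \<in> X" "y0 \<in> Y" "T *v x0 + Q *v y0 = h"
    by (rule feasF_obtain_feasible)
  have "v \<le> \<rho> \<bullet> x + (\<rho>0 *\<^sub>R d) \<bullet> y" if "x \<in> X" "y \<in> Y" "T *v x + Q *v y = h" for x y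
    using supp2_feasF_le[OF that, of d \<rho> \<rho>0] v by simp
  then obtain \<alpha> where \<alpha>: "\<forall>x\<in>X. \<forall>y\<in>Y. v \<le> \<rho> \<bullet> x + (\<rho>0 *\<^sub>R d) \<bullet> y + \<alpha> \<bullet> (T *v x + Q *v y - h)"
    using lp_multiplier_block[OF assms(1,3)] feas unfolding assms(2,4) by blast
  have "v + \<alpha> \<bullet> h \<le> (\<rho> + transpose T *v \<alpha>) \<bullet> x + (transpose Q *v \<alpha> + \<rho>0 *\<^sub>R d) \<bullet> y"
    if "x \<in> X" "y \<in> Y" for x y
    using \<alpha>[rule_format, OF that] by (simp add: inner_add_left inner_add_right inner_diff_right dot_lmul_matrix)
  with feas(1,2) have "ereal (v + \<alpha> \<bullet> h)
      \<le> supp X (\<rho> + transpose T *v \<alpha>) + supp Y (transpose Q *v \<alpha> + \<rho>0 *\<^sub>R d)"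
    by (rule ereal_le_supp_add_supp)
  then have "ereal (- (\<alpha> \<bullet> h)) + ereal (v + \<alpha> \<bullet> h) \<le> dualobj X Y T Q h d \<rho> \<rho>0 \<alpha>"
    unfolding dualobj_def add.assoc by (rule add_left_mono)
  then show thesis
    by (intro that) simp
qed

theorem mainTheorem3:
  fixes X :: "(real^'n) set" and Y :: "(real^'m) set"
    and T :: "real^'n^'p" and Q :: "real^'m^'p" and h :: "real^'p"
    and c :: "real^'n" and d :: "real^'m"
    and \<rho> :: "real^'n" and \<rho>0 :: real
  assumes "rat_polyhedron X" and "X \<noteq> {}"
    and "rat_polyhedron Y" and "Y \<noteq> {}" and "pointed Y"
    and "\<rho>0 \<ge> 0"
    and "supp2 (feasF X Y T Q h d) \<rho> \<rho>0 \<noteq> \<infinity>"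
    and "supp2 (feasF X Y T Q h d) \<rho> \<rho>0 \<noteq> -\<infinity>"
  shows "(\<exists>\<alpha>0. \<forall>\<alpha>. dualobj X Y T Q h d \<rho> \<rho>0 \<alpha> \<le> dualobj X Y T Q h d \<rho> \<rho>0 \<alpha>0)
    \<and> (SUP \<alpha>. dualobj X Y T Q h d \<rho> \<rho>0 \<alpha>) = supp2 (feasF X Y T Q h d) \<rho> \<rho>0
    \<and> (\<forall>\<alpha>h. (\<forall>\<alpha>. dualobj X Y T Q h d \<rho> \<rho>0 \<alpha> \<le> dualobj X Y T Q h d \<rho> \<rho>0 \<alpha>h) \<longrightarrow>
         (\<forall>x \<theta>. x \<in> X \<and> supp2 (epi (fval Y d Q)) \<alpha>h \<rho>0 \<le> ereal (\<alpha>h \<bullet> (h - T *v x) + \<rho>0 * \<theta>)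
            \<longrightarrow> supp2 (feasF X Y T Q h d) \<rho> \<rho>0 \<le> ereal (\<rho> \<bullet> x + \<rho>0 * \<theta>)))"
proof -
  let ?D = "dualobj X Y T Q h d \<rho> \<rho>0"
  obtain FX where "finite FX" "X = polyhedron_of FX"
    using assms(1) by (rule rat_polyhedron_imp_polyhedron_of)
  obtain FY where "finite FY" "Y = polyhedron_of FY"
    using assms(3) by (rule rat_polyhedron_imp_polyhedron_of)
  obtain v where v: "supp2 (feasF X Y T Q h d) \<rho> \<rho>0 = ereal v"
    using assms(7,8) by (cases "supp2 (feasF X Y T Q h d) \<rho> \<rho>0") auto
  obtain \<alpha>0 where \<alpha>0: "ereal v \<le> ?D \<alpha>0"
    using \<open>finite FX\<close> \<open>X = _\<close> \<open>finite FY\<close> \<open>Y = _\<close> v by (rule dualobj_attains_supp2)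
  have weak: "?D \<alpha> \<le> ereal v" for \<alpha>
    unfolding v[symmetric] by (rule dualobj_le_supp2_feasF[OF assms(6)])
  have "(SUP \<alpha>. ?D \<alpha>) = ereal v"
    using SUP_least[OF weak] order_trans[OF \<alpha>0 SUP_upper[OF UNIV_I, of ?D]] by (rule antisym)
  then show ?thesis
  proof (intro conjI allI impI)
    show "\<exists>\<alpha>0. \<forall>\<alpha>. ?D \<alpha> \<le> ?D \<alpha>0"
      using weak \<alpha>0 order_trans by blast
  next
    fix \<alpha>h x \<theta>
    assume "\<forall>\<alpha>. ?D \<alpha> \<le> ?D \<alpha>h"
      and cut: "x \<in> X \<and> supp2 (epi (fval Y d Q)) \<alpha>h \<rho>0 \<le> ereal (\<alpha>h \<bullet> (h - T *v x) + \<rho>0 * \<theta>)"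
    then have "supp2 (feasF X Y T Q h d) \<rho> \<rho>0 \<le> ?D \<alpha>h"
      using v \<alpha>0 order_trans by metis
    also have "\<dots> \<le> ereal (\<rho> \<bullet> x + \<rho>0 * \<theta>)"
      using cut by (intro dualobj_le_of_benders_cut[OF assms(6)]) auto
    finally show "supp2 (feasF X Y T Q h d) \<rho> \<rho>0 \<le> ereal (\<rho> \<bullet> x + \<rho>0 * \<theta>)" .
  qed (use v in simp)
qed

end
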